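(* Let $(\mathcal{X},d)$ be a metric space with the following barycenter property: for every $K\ge1$, every $\boldsymbol{w}\in\Delta^{K-1}$ and every $\boldsymbol{a}=(a_1,\dots,a_K)\in\mathcal{X}^K$ the function $C\mapsto\sum_{s=1}^K w_s d^2(a_s,C)$ attains its minimum on $\mathcal{X}$. Let $\boldsymbol{a}=(a_1,\dots,a_K)\in\mathcal{X}^K$, $\boldsymbol{w}\in\Delta^{K-1}$, and let $C_{\boldsymbol{a}}\in\arg\min_{C\in\mathcal{X}}\sum_{s=1}^K w_s d^2(a_s,C)$. Fix $\alpha\in[0,1]$ and assume $\boldsymbol{b}=(b_1,\dots,b_K)\in\mathcal{X}^K$ satisfies, for all $s=1,\dots,K$, $$d(a_s,C_{\boldsymbol{a}})=d(a_s,b_s)+d(b_s,C_{\boldsymbol{a}}),\qquad d(b_s,a_s)=(1-\alpha^{1/2})\,d(a_s,C_{\boldsymbol{a}}).$$ Then $\boldsymbol{b}$ is a solution of $$\inf_{\boldsymbol{b}'\in\mathcal{X}^K}\Big\{\sum_{s=1}^K w_s d^2(b'_s,a_s)\;:\;\min_{C\in\mathcal{X}}\sum_{s=1}^K w_s d^2(b'_s,C)\le\alpha\sum_{s=1}^K w_s d^2(a_s,C_{\boldsymbol{a}})\Big\}.$$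
   Context: $\Delta^{K-1}$ denotes the probability simplex in $\mathbb{R}^K$. In the constraint, $\min_{C}\sum_s w_s d^2(b'_s,C)$ equals $\sum_s w_s d^2(b'_s,C_{\boldsymbol{b}'})$ for any weighted barycenter $C_{\boldsymbol{b}'}$ of $\boldsymbol{b}'$. *)

theory Defs
  imports "HOL-Analysis.Analysis"
begin

text \<open>Index set {0..<K}; tuples are functions nat => 'x restricted to indices < K.\<close>

definition prob_simplex :: "nat \<Rightarrow> (nat \<Rightarrow> real) set" where
  "prob_simplex K = {w. (\<forall>s<K. 0 \<le> w s) \<and> (\<Sum>s<K. w s) = 1}"

definition wcost :: "nat \<Rightarrow> (nat \<Rightarrow> real) \<Rightarrow> (nat \<Rightarrow> 'x::metric_space) \<Rightarrow> 'x \<Rightarrow> real" where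
  "wcost K w a C = (\<Sum>s<K. w s * (dist (a s) C)\<^sup>2)"

definition barycenter_property :: "'x::metric_space itself \<Rightarrow> bool" where
  "barycenter_property _ \<longleftrightarrow>
     (\<forall>K\<ge>1. \<forall>w\<in>prob_simplex K. \<forall>a::nat \<Rightarrow> 'x.
        \<exists>C. \<forall>C'. wcost K w a C \<le> wcost K w a C')"

definition is_barycenter :: "nat \<Rightarrow> (nat \<Rightarrow> real) \<Rightarrow> (nat \<Rightarrow> 'x::metric_space) \<Rightarrow> 'x \<Rightarrow> bool" where
  "is_barycenter K w a C \<longleftrightarrow> (\<forall>C'. wcost K w a C \<le> wcost K w a C')"

text \<open>min over C of the weighted cost (attained under the barycenter property).\<close>
definition minwcost :: "nat \<Rightarrow> (nat \<Rightarrow> real) \<Rightarrow> (nat \<Rightarrow> 'x::metric_space) \<Rightarrow> real" where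
  "minwcost K w a = Inf (range (wcost K w a))"

definition transport_cost :: "nat \<Rightarrow> (nat \<Rightarrow> real) \<Rightarrow> (nat \<Rightarrow> 'x::metric_space) \<Rightarrow> (nat \<Rightarrow> 'x) \<Rightarrow> real" where
  "transport_cost K w b a = (\<Sum>s<K. w s * (dist (b s) (a s))\<^sup>2)"

end

theory Submission
  imports Defs
begin

text \<open>Write \<open>D\<close> for the optimal cost of \<open>a\<close>. For any competitor \<open>b'\<close> with barycenter \<open>C'\<close>,
  Minkowski's inequality in the weighted \<open>\<ell>\<^sup>2\<close> space over the indices gives
  \<open>\<surd>D \<le> \<surd>(cost of a at C') \<le> \<surd>(transport cost of b' to a) + \<surd>(cost of b' at C')\<close>,
  and the constraint bounds the last term by \<open>\<surd>\<alpha> \<surd>D\<close>. Hence every admissible \<open>b'\<close> has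
  transport cost at least \<open>(1 - \<surd>\<alpha>)\<^sup>2 D\<close>. The points \<open>b\<^sub>s\<close> on the geodesics from \<open>a\<^sub>s\<close> to
  \<open>C\<^sub>a\<close> attain this bound, and their cost at \<open>C\<^sub>a\<close> is exactly \<open>\<alpha> D\<close>, so they are admissible.\<close>

lemma weighted_sqrt_sum_squares_triangle:
  fixes w f g h :: "'i \<Rightarrow> real"
  assumes "\<And>i. i \<in> I \<Longrightarrow> 0 \<le> w i"
    and "\<And>i. i \<in> I \<Longrightarrow> 0 \<le> h i"
    and "\<And>i. i \<in> I \<Longrightarrow> h i \<le> f i + g i"
  shows "sqrt (\<Sum>i\<in>I. w i * (h i)\<^sup>2)
           \<le> sqrt (\<Sum>i\<in>I. w i * (f i)\<^sup>2) + sqrt (\<Sum>i\<in>I. w i * (g i)\<^sup>2)"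
proof -
  have L2_weighted: "L2_set (\<lambda>i. sqrt (w i) * u i) I = sqrt (\<Sum>i\<in>I. w i * (u i)\<^sup>2)"
    for u :: "'i \<Rightarrow> real"
    unfolding L2_set_def using assms(1) by (simp add: power_mult_distrib)
  have "L2_set (\<lambda>i. sqrt (w i) * h i) I \<le> L2_set (\<lambda>i. sqrt (w i) * f i + sqrt (w i) * g i) I"
    using assms by (intro L2_set_mono) (simp_all add: mult_left_mono flip: distrib_left)
  also have "\<dots> \<le> L2_set (\<lambda>i. sqrt (w i) * f i) I + L2_set (\<lambda>i. sqrt (w i) * g i) I"
    by (rule L2_set_triangle_ineq)
  finally show ?thesis
    unfolding L2_weighted .
qed

lemma wcost_nonneg:
  assumes "\<forall>s<K. 0 \<le> w s"
  shows "0 \<le> wcost K w a C"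
  using assms unfolding wcost_def by (auto intro!: sum_nonneg)

lemma transport_cost_nonneg:
  assumes "\<forall>s<K. 0 \<le> w s"
  shows "0 \<le> transport_cost K w b a"
  using assms unfolding transport_cost_def by (auto intro!: sum_nonneg)

lemma sqrt_wcost_triangle:
  assumes "\<forall>s<K. 0 \<le> w s"
  shows "sqrt (wcost K w a C) \<le> sqrt (transport_cost K w b a) + sqrt (wcost K w b C)"
  unfolding wcost_def transport_cost_def
  using assms by (intro weighted_sqrt_sum_squares_triangle) (auto simp: dist_triangle3)

lemma wcost_scaled:
  assumes "\<forall>s<K. dist (b s) C = t * dist (a s) C"
  shows "wcost K w b C = t\<^sup>2 * wcost K w a C"
  using assms unfolding wcost_def
  by (simp add: sum_distrib_left power_mult_distrib mult_ac)

lemma transport_cost_scaled: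
  assumes "\<forall>s<K. dist (b s) (a s) = t * dist (a s) C"
  shows "transport_cost K w b a = t\<^sup>2 * wcost K w a C"
  using assms unfolding wcost_def transport_cost_def
  by (simp add: sum_distrib_left power_mult_distrib mult_ac)

lemma minwcost_le_wcost:
  assumes "\<forall>s<K. 0 \<le> w s"
  shows "minwcost K w a \<le> wcost K w a C"
  unfolding minwcost_def
proof (rule cInf_lower)
  show "bdd_below (range (wcost K w a))"
    using wcost_nonneg[OF assms] by (intro bdd_belowI[where m = 0]) auto
qed simp

lemma minwcost_eq_wcost_barycenter:
  assumes "is_barycenter K w a C"
  shows "minwcost K w a = wcost K w a C"
  using assms unfolding minwcost_def is_barycenter_def by (intro cInf_eq_minimum) auto

lemma barycenter_exists:
  fixes a :: "nat \<Rightarrow> 'x::metric_space"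
  assumes "barycenter_property TYPE('x)" "K \<ge> 1" "w \<in> prob_simplex K"
  obtains C where "is_barycenter K w a C"
  using assms unfolding barycenter_property_def is_barycenter_def by blast

lemma transport_cost_lower_bound:
  assumes w: "\<forall>s<K. 0 \<le> w s"
    and Ca: "is_barycenter K w a Ca" and C': "is_barycenter K w b' C'"
    and \<alpha>: "0 \<le> \<alpha>" "\<alpha> \<le> 1"
    and constraint: "wcost K w b' C' \<le> \<alpha> * wcost K w a Ca"
  shows "(1 - sqrt \<alpha>)\<^sup>2 * wcost K w a Ca \<le> transport_cost K w b' a"
proof -
  define D where "D = wcost K w a Ca"
  have "0 \<le> D"
    unfolding D_def using wcost_nonneg[OF w] .
  have "sqrt D \<le> sqrt (wcost K w a C')"
    using Ca unfolding is_barycenter_def D_def by simp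
  also have "\<dots> \<le> sqrt (transport_cost K w b' a) + sqrt (wcost K w b' C')"
    using sqrt_wcost_triangle[OF w] .
  also have "sqrt (wcost K w b' C') \<le> sqrt \<alpha> * sqrt D"
    using constraint by (simp add: D_def flip: real_sqrt_mult)
  finally have "(1 - sqrt \<alpha>) * sqrt D \<le> sqrt (transport_cost K w b' a)"
    by (simp add: algebra_simps)
  moreover have "0 \<le> (1 - sqrt \<alpha>) * sqrt D"
    using \<alpha> \<open>0 \<le> D\<close> by simp
  ultimately have "((1 - sqrt \<alpha>) * sqrt D)\<^sup>2 \<le> (sqrt (transport_cost K w b' a))\<^sup>2"
    by (rule power_mono)
  then show ?thesis
    using \<open>0 \<le> D\<close> transport_cost_nonneg[OF w, of b' a] by (simp add: D_def power_mult_distrib)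
qed

theorem lemma1:
  fixes a b :: "nat \<Rightarrow> 'x::metric_space" and w :: "nat \<Rightarrow> real"
    and K :: nat and Ca :: 'x and \<alpha> :: real
  assumes bary: "barycenter_property TYPE('x)"
    and K: "K \<ge> 1"
    and w: "w \<in> prob_simplex K"
    and Ca: "is_barycenter K w a Ca"
    and \<alpha>: "0 \<le> \<alpha>" "\<alpha> \<le> 1"
    and geo: "\<forall>s<K. dist (a s) Ca = dist (a s) (b s) + dist (b s) Ca"
    and frac: "\<forall>s<K. dist (b s) (a s) = (1 - sqrt \<alpha>) * dist (a s) Ca"
  shows "minwcost K w b \<le> \<alpha> * wcost K w a Ca \<and>
         (\<forall>b'::nat \<Rightarrow> 'x. minwcost K w b' \<le> \<alpha> * wcost K w a Ca \<longrightarrow>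
            transport_cost K w b a \<le> transport_cost K w b' a)"
proof (intro conjI allI impI)
  have w_nonneg: "\<forall>s<K. 0 \<le> w s"
    using w unfolding prob_simplex_def by simp
  have "\<forall>s<K. dist (b s) Ca = sqrt \<alpha> * dist (a s) Ca"
    using geo frac by (simp add: dist_commute algebra_simps)
  then have "wcost K w b Ca = (sqrt \<alpha>)\<^sup>2 * wcost K w a Ca"
    by (rule wcost_scaled)
  then have "wcost K w b Ca = \<alpha> * wcost K w a Ca"
    using \<alpha> by simp
  then show "minwcost K w b \<le> \<alpha> * wcost K w a Ca"
    using minwcost_le_wcost[OF w_nonneg] by metis
  fix b' :: "nat \<Rightarrow> 'x"
  assume admissible: "minwcost K w b' \<le> \<alpha> * wcost K w a Ca"
  obtain C' where C': "is_barycenter K w b' C'"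
    using barycenter_exists[OF bary K w] .
  have "transport_cost K w b a = (1 - sqrt \<alpha>)\<^sup>2 * wcost K w a Ca"
    using frac by (rule transport_cost_scaled)
  also have "\<dots> \<le> transport_cost K w b' a"
    using admissible minwcost_eq_wcost_barycenter[OF C']
    by (intro transport_cost_lower_bound[OF w_nonneg Ca C' \<alpha>]) simp
  finally show "transport_cost K w b a \<le> transport_cost K w b' a" .
qed

end
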